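(* Let $L$ be a simple Lie algebra over a field $k$ with $|k|>2$, generated by its pure extremal elements, such that there exists a Galois extension $k'/k$ of degree at most $2$ for which the extremal geometry of $L\otimes_k k'$ contains lines, and such that there exist symplectic pairs of extremal elements in $L$. Then $L_{k'}:=L\otimes_k k'$ is simple.
   Context: A nonzero $a$ in a Lie algebra $M$ over $F$ is extremal if there is $g_a\colon M\to F$ with $[a,[a,u]]=2g_a(u)a$, $[[a,u],[a,w]]=g_a([u,w])a+g_a(w)[a,u]-g_a(u)[a,w]$, $[a,[u,[a,w]]]=g_a([u,w])a-g_a(w)[a,u]-g_a(u)[a,w]$ for all $u,w$; sandwiches satisfy $[a,[a,u]]=0=[a,[u,[a,w]]]$; pure = non-sandwich. Pure extremal $a,b$ with $Fa\ne Fb$ are collinear if $[a,b]=0$ and $\lambda a+\mu b$ is extremal or $0$ for all $\lambda,\mu$, and symplectic if $[a,b]=0$ and $\lambda a+\mu b$ is extremal or $0$ only when $\lambda\mu=0$. The extremal geometry (points: $Fa$, $a$ extremal; lines: spans of collinear pairs) contains lines iff a collinear pair exists. *)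

theory Defs
  imports Complex_Main
begin

definition lie_algebra :: "('k::field \<Rightarrow> 'l::ab_group_add \<Rightarrow> 'l) \<Rightarrow> ('l \<Rightarrow> 'l \<Rightarrow> 'l) \<Rightarrow> bool" where
  "lie_algebra sc br \<longleftrightarrow>
     module sc \<and>
     (\<forall>x y z. br (x + y) z = br x z + br y z) \<and>
     (\<forall>x y z. br x (y + z) = br x y + br x z) \<and>
     (\<forall>c x y. br (sc c x) y = sc c (br x y)) \<and>
     (\<forall>c x y. br x (sc c y) = sc c (br x y)) \<and>
     (\<forall>x. br x x = 0) \<and>
     (\<forall>x y z. br x (br y z) + br y (br z x) + br z (br x y) = 0)"

definition lie_ideal :: "('k::field \<Rightarrow> 'l::ab_group_add \<Rightarrow> 'l) \<Rightarrow> ('l \<Rightarrow> 'l \<Rightarrow> 'l) \<Rightarrow> 'l set \<Rightarrow> bool" where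
  "lie_ideal sc br I \<longleftrightarrow> module.subspace sc I \<and> (\<forall>x y. y \<in> I \<longrightarrow> br x y \<in> I)"

definition simple_lie :: "('k::field \<Rightarrow> 'l::ab_group_add \<Rightarrow> 'l) \<Rightarrow> ('l \<Rightarrow> 'l \<Rightarrow> 'l) \<Rightarrow> bool" where
  "simple_lie sc br \<longleftrightarrow> (\<exists>x y. br x y \<noteq> 0) \<and>
     (\<forall>I. lie_ideal sc br I \<longrightarrow> I = {0} \<or> I = UNIV)"

definition lie_subalgebra :: "('k::field \<Rightarrow> 'l::ab_group_add \<Rightarrow> 'l) \<Rightarrow> ('l \<Rightarrow> 'l \<Rightarrow> 'l) \<Rightarrow> 'l set \<Rightarrow> bool" where
  "lie_subalgebra sc br S \<longleftrightarrow> module.subspace sc S \<and> (\<forall>x\<in>S. \<forall>y\<in>S. br x y \<in> S)"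

definition lie_generated :: "('k::field \<Rightarrow> 'l::ab_group_add \<Rightarrow> 'l) \<Rightarrow> ('l \<Rightarrow> 'l \<Rightarrow> 'l) \<Rightarrow> 'l set \<Rightarrow> 'l set" where
  "lie_generated sc br E = \<Inter>{S. lie_subalgebra sc br S \<and> E \<subseteq> S}"

definition extremal_form :: "('k::field \<Rightarrow> 'l::ab_group_add \<Rightarrow> 'l) \<Rightarrow> ('l \<Rightarrow> 'l \<Rightarrow> 'l) \<Rightarrow> 'l \<Rightarrow> ('l \<Rightarrow> 'k) \<Rightarrow> bool" where
  "extremal_form sc br a g \<longleftrightarrow>
     (\<forall>u. br a (br a u) = sc (2 * g u) a) \<and>
     (\<forall>u w. br (br a u) (br a w) = sc (g (br u w)) a + sc (g w) (br a u) - sc (g u) (br a w)) \<and>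
     (\<forall>u w. br a (br u (br a w)) = sc (g (br u w)) a - sc (g w) (br a u) - sc (g u) (br a w))"

definition extremal :: "('k::field \<Rightarrow> 'l::ab_group_add \<Rightarrow> 'l) \<Rightarrow> ('l \<Rightarrow> 'l \<Rightarrow> 'l) \<Rightarrow> 'l \<Rightarrow> bool" where
  "extremal sc br a \<longleftrightarrow> a \<noteq> 0 \<and> (\<exists>g. extremal_form sc br a g)"

definition sandwich :: "('k::field \<Rightarrow> 'l::ab_group_add \<Rightarrow> 'l) \<Rightarrow> ('l \<Rightarrow> 'l \<Rightarrow> 'l) \<Rightarrow> 'l \<Rightarrow> bool" where
  "sandwich sc br a \<longleftrightarrow> extremal sc br a \<and>
     (\<forall>u. br a (br a u) = 0) \<and> (\<forall>u w. br a (br u (br a w)) = 0)"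

definition pure_extremal :: "('k::field \<Rightarrow> 'l::ab_group_add \<Rightarrow> 'l) \<Rightarrow> ('l \<Rightarrow> 'l \<Rightarrow> 'l) \<Rightarrow> 'l \<Rightarrow> bool" where
  "pure_extremal sc br a \<longleftrightarrow> extremal sc br a \<and> \<not> sandwich sc br a"

definition collinear_pair :: "('k::field \<Rightarrow> 'l::ab_group_add \<Rightarrow> 'l) \<Rightarrow> ('l \<Rightarrow> 'l \<Rightarrow> 'l) \<Rightarrow> 'l \<Rightarrow> 'l \<Rightarrow> bool" where
  "collinear_pair sc br a b \<longleftrightarrow>
     pure_extremal sc br a \<and> pure_extremal sc br b \<and>
     module.span sc {a} \<noteq> module.span sc {b} \<and> br a b = 0 \<and>
     (\<forall>s t. extremal sc br (sc s a + sc t b) \<or> sc s a + sc t b = 0)"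

definition symplectic_pair :: "('k::field \<Rightarrow> 'l::ab_group_add \<Rightarrow> 'l) \<Rightarrow> ('l \<Rightarrow> 'l \<Rightarrow> 'l) \<Rightarrow> 'l \<Rightarrow> 'l \<Rightarrow> bool" where
  "symplectic_pair sc br a b \<longleftrightarrow>
     pure_extremal sc br a \<and> pure_extremal sc br b \<and>
     module.span sc {a} \<noteq> module.span sc {b} \<and> br a b = 0 \<and>
     (\<forall>s t. (extremal sc br (sc s a + sc t b) \<or> sc s a + sc t b = 0) \<longrightarrow> s * t = 0)"

text \<open>The extremal geometry contains lines iff there is a collinear pair.\<close>
definition geometry_has_lines :: "('k::field \<Rightarrow> 'l::ab_group_add \<Rightarrow> 'l) \<Rightarrow> ('l \<Rightarrow> 'l \<Rightarrow> 'l) \<Rightarrow> bool" where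
  "geometry_has_lines sc br \<longleftrightarrow> (\<exists>a b. collinear_pair sc br a b)"

definition field_hom :: "('k::field \<Rightarrow> 'K::field) \<Rightarrow> bool" where
  "field_hom \<iota> \<longleftrightarrow> (\<forall>a b. \<iota> (a + b) = \<iota> a + \<iota> b) \<and> (\<forall>a b. \<iota> (a * b) = \<iota> a * \<iota> b) \<and> \<iota> 1 = 1"

definition ext_scale :: "('k::field \<Rightarrow> 'K::field) \<Rightarrow> 'k \<Rightarrow> 'K \<Rightarrow> 'K" where
  "ext_scale \<iota> c x = \<iota> c * x"

definition ext_degree_le :: "('k::field \<Rightarrow> 'K::field) \<Rightarrow> nat \<Rightarrow> bool" where
  "ext_degree_le \<iota> n \<longleftrightarrow> (\<exists>B. finite B \<and> card B \<le> n \<and> module.span (ext_scale \<iota>) B = UNIV)"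

definition rel_automorphism :: "('k::field \<Rightarrow> 'K::field) \<Rightarrow> ('K \<Rightarrow> 'K) \<Rightarrow> bool" where
  "rel_automorphism \<iota> \<sigma> \<longleftrightarrow> bij \<sigma> \<and> (\<forall>x y. \<sigma> (x + y) = \<sigma> x + \<sigma> y) \<and>
     (\<forall>x y. \<sigma> (x * y) = \<sigma> x * \<sigma> y) \<and> (\<forall>c. \<sigma> (\<iota> c) = \<iota> c)"

text \<open>A finite extension is Galois iff the fixed field of its automorphism group is the base field.\<close>
definition galois_ext :: "('k::field \<Rightarrow> 'K::field) \<Rightarrow> bool" where
  "galois_ext \<iota> \<longleftrightarrow> field_hom \<iota> \<and> (\<exists>n. ext_degree_le \<iota> n) \<and>
     {x. \<forall>\<sigma>. rel_automorphism \<iota> \<sigma> \<longrightarrow> \<sigma> x = x} = range \<iota>"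

text \<open>(M, scM, brM) together with j : L \<rightarrow> M realises L \<otimes>_k K: M is a K-Lie algebra,
j is k-linear (k acting on M through \<iota>) and bracket preserving, and j maps every
k-basis of L injectively onto a K-basis of M.\<close>
definition scalar_extension ::
  "('k::field \<Rightarrow> 'K::field) \<Rightarrow> ('k \<Rightarrow> 'l::ab_group_add \<Rightarrow> 'l) \<Rightarrow> ('l \<Rightarrow> 'l \<Rightarrow> 'l) \<Rightarrow>
   ('K \<Rightarrow> 'm::ab_group_add \<Rightarrow> 'm) \<Rightarrow> ('m \<Rightarrow> 'm \<Rightarrow> 'm) \<Rightarrow> ('l \<Rightarrow> 'm) \<Rightarrow> bool" where
  "scalar_extension \<iota> scL brL scM brM j \<longleftrightarrow>
     lie_algebra scM brM \<and>
     (\<forall>x y. j (x + y) = j x + j y) \<and>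
     (\<forall>c x. j (scL c x) = scM (\<iota> c) (j x)) \<and>
     (\<forall>x y. j (brL x y) = brM (j x) (j y)) \<and>
     (\<forall>B. (\<not> module.dependent scL B \<and> module.span scL B = UNIV) \<longrightarrow>
        inj_on j B \<and> \<not> module.dependent scM (j ` B) \<and> module.span scM (j ` B) = UNIV)"

end

theory Submission
  imports Defs
begin

(* Write K = k + k\<theta>. The preimage in L of an ideal J of L \<otimes> K is an ideal of L, hence L or 0.
   In the first case J is everything. In the second, the elements a with j a + \<theta> j b \<in> J for
   some b form an ideal of L, and b is determined by a; so either J = 0 or J is the graph of a map
   \<phi> on all of L commuting with every ad x, i.e. an element of the centroid.
   A pure extremal element x makes the centroid k: if g is its extremal form and g w \<noteq> 0, the
   identity for [[x,w],[x,\<phi> w]] shows that [x,w] \<noteq> 0 is an eigenvector of \<phi>, and the eigenspace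
   is a nonzero ideal. With \<phi> = \<mu>, J contains (1 + \<theta> \<mu>) j L, which forces 1 + \<theta> \<mu> = 0 and then J = 0. *)

definition centroid :: "('k::field \<Rightarrow> 'l::ab_group_add \<Rightarrow> 'l) \<Rightarrow> ('l \<Rightarrow> 'l \<Rightarrow> 'l) \<Rightarrow> ('l \<Rightarrow> 'l) set" where
  "centroid sc br = {\<phi>. (\<forall>a b. \<phi> (a + b) = \<phi> a + \<phi> b) \<and> (\<forall>c a. \<phi> (sc c a) = sc c (\<phi> a)) \<and>
     (\<forall>a b. \<phi> (br a b) = br a (\<phi> b))}"

lemma simple_lie_ideal_cases:
  "simple_lie sc br \<Longrightarrow> lie_ideal sc br I \<Longrightarrow> I = {0} \<or> I = UNIV"
  unfolding simple_lie_def by blast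

lemma simple_lie_nonabelian: "simple_lie sc br \<Longrightarrow> \<exists>x y. br x y \<noteq> 0"
  unfolding simple_lie_def by blast

locale lie_alg =
  fixes sc :: "'k::field \<Rightarrow> 'l::ab_group_add \<Rightarrow> 'l" and br :: "'l \<Rightarrow> 'l \<Rightarrow> 'l"
  assumes lie_algebra: "lie_algebra sc br"
begin

sublocale vector_space sc
  using lie_algebra unfolding lie_algebra_def module_iff_vector_space by blast

lemma bracket_add_left: "br (x + y) z = br x z + br y z"
  and bracket_add_right: "br x (y + z) = br x y + br x z"
  and bracket_scale_left: "br (sc c x) y = sc c (br x y)"
  and bracket_scale_right: "br x (sc c y) = sc c (br x y)"
  and bracket_self [simp]: "br x x = 0"
  using lie_algebra unfolding lie_algebra_def by blast+

lemma bracket_zero_left [simp]: "br 0 y = 0"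
  using bracket_add_left[of 0 0 y] by simp

lemma bracket_zero_right [simp]: "br y 0 = 0"
  using bracket_add_right[of y 0 0] by simp

lemma bracket_antisym: "br y x = - br x y"
  using bracket_add_left[of x y "x + y"] by (simp add: bracket_add_right eq_neg_iff_add_eq_0 add.commute)

lemma lie_idealI:
  assumes "subspace I" and "\<And>x y. y \<in> I \<Longrightarrow> br x y \<in> I"
  shows "lie_ideal sc br I"
  using assms unfolding lie_ideal_def by blast

lemma simple_lie_bracket_not_in_span:
  assumes simple: "simple_lie sc br" and "x \<noteq> 0"
  obtains v where "br x v \<notin> span {x}"
proof (rule ccontr)
  assume "\<not> thesis"
  with that have ad_x: "br x v \<in> span {x}" for v by blast
  have "lie_ideal sc br (span {x})"
  proof (rule lie_idealI)
    show "br y a \<in> span {x}" if a: "a \<in> span {x}" for y a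
    proof -
      obtain c where "a = sc c x" using a by (auto simp: span_singleton)
      then show ?thesis
        using ad_x[of y] by (simp add: bracket_scale_right bracket_antisym[of y x] span_neg span_scale)
    qed
  qed simp
  moreover have "span {x} \<noteq> {0}" using \<open>x \<noteq> 0\<close> span_base[of x "{x}"] by blast
  ultimately have "span {x} = UNIV" using simple_lie_ideal_cases[OF simple] by blast
  then have "br y z = 0" for y z
  proof -
    obtain c d where "y = sc c x" "z = sc d x"
      using \<open>span {x} = UNIV\<close> by (metis UNIV_I imageE span_singleton)
    then show ?thesis by (simp add: bracket_scale_left bracket_scale_right)
  qed
  then show False using simple_lie_nonabelian[OF simple] by blast
qed

lemma extremal_form_zero:
  assumes "x \<noteq> 0" and "extremal_form sc br x g"
  shows "g 0 = 0"
proof -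
  have "br (br x 0) (br x 0) = sc (g (br 0 0)) x + sc (g 0) (br x 0) - sc (g 0) (br x 0)"
    using assms(2) unfolding extremal_form_def by blast
  then show ?thesis using assms(1) by simp
qed

lemma pure_extremal_form_nonzero:
  assumes "pure_extremal sc br x" and "extremal_form sc br x g"
  obtains w where "g w \<noteq> 0"
proof (rule ccontr)
  assume "\<not> thesis"
  with that have "g w = 0" for w by blast
  with assms have "sandwich sc br x"
    unfolding pure_extremal_def sandwich_def extremal_form_def by simp
  with assms(1) show False unfolding pure_extremal_def by blast
qed

lemma extremal_form_bracket_in_span:
  assumes g: "extremal_form sc br x g" and "g w \<noteq> 0" and "br x w = 0"
  shows "br x u \<in> span {x}"
proof -
  have "br x (br u (br x w)) = sc (g (br u w)) x - sc (g w) (br x u) - sc (g u) (br x w)"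
    using g unfolding extremal_form_def by blast
  then have "sc (g w) (br x u) = sc (g (br u w)) x"
    using \<open>br x w = 0\<close> by simp
  then have "sc (inverse (g w)) (sc (g w) (br x u)) = sc (inverse (g w)) (sc (g (br u w)) x)"
    by simp
  then have "br x u = sc (g (br u w) / g w) x"
    using \<open>g w \<noteq> 0\<close> by (simp add: field_simps)
  then show ?thesis by (auto simp: span_singleton)
qed

lemma centroid_bracket_eigenvector:
  assumes \<phi>: "\<phi> \<in> centroid sc br" and "x \<noteq> 0" and g: "extremal_form sc br x g" and "g w \<noteq> 0"
  shows "\<phi> (br x w) = sc (g (\<phi> w) / g w) (br x w)"
proof -
  have \<phi>_add: "\<phi> (a + b) = \<phi> a + \<phi> b" and \<phi>_br: "\<phi> (br a b) = br a (\<phi> b)" for a b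
    using \<phi> unfolding centroid_def by blast+
  have \<phi>_zero: "\<phi> 0 = 0" using \<phi>_add[of 0 0] by simp
  have "br (br x w) (br x (\<phi> w)) = sc (g (br w (\<phi> w))) x + sc (g (\<phi> w)) (br x w) - sc (g w) (br x (\<phi> w))"
    using g unfolding extremal_form_def by blast
  moreover have "br w (\<phi> w) = 0" and "br (br x w) (\<phi> (br x w)) = 0"
    using \<phi>_br[of w w] \<phi>_br[of "br x w" "br x w"] by (simp_all add: \<phi>_zero)
  ultimately have "sc (g w) (\<phi> (br x w)) = sc (g (\<phi> w)) (br x w)"
    using extremal_form_zero[OF \<open>x \<noteq> 0\<close> g] by (simp add: \<phi>_br)
  then have "sc (inverse (g w)) (sc (g w) (\<phi> (br x w))) = sc (inverse (g w)) (sc (g (\<phi> w)) (br x w))"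
    by simp
  then show ?thesis using \<open>g w \<noteq> 0\<close> by (simp add: field_simps)
qed

lemma centroid_eigenspace_ideal:
  assumes "\<phi> \<in> centroid sc br"
  shows "lie_ideal sc br {a. \<phi> a = sc \<mu> a}"
proof (rule lie_idealI)
  show "subspace {a. \<phi> a = sc \<mu> a}"
    using assms unfolding centroid_def
    by (intro subspaceI) (auto simp: scale_right_distrib scale_left_commute[of \<mu>] dest: spec[of _ 0])
  show "br x a \<in> {a. \<phi> a = sc \<mu> a}" if "a \<in> {a. \<phi> a = sc \<mu> a}" for x a
    using assms that unfolding centroid_def by (simp add: bracket_scale_right)
qed

theorem centroid_simple_pure_extremal:
  assumes simple: "simple_lie sc br" and pure: "pure_extremal sc br x"
  shows "centroid sc br = range sc"
proof
  show "range sc \<subseteq> centroid sc br"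
    unfolding centroid_def by (auto simp: scale_right_distrib scale_left_commute bracket_scale_right)
  show "centroid sc br \<subseteq> range sc"
  proof
    fix \<phi> assume \<phi>: "\<phi> \<in> centroid sc br"
    have "x \<noteq> 0" using pure unfolding pure_extremal_def extremal_def by blast
    obtain g where g: "extremal_form sc br x g"
      using pure unfolding pure_extremal_def extremal_def by blast
    obtain w where gw: "g w \<noteq> 0" using pure_extremal_form_nonzero[OF pure g] .
    have "br x w \<noteq> 0"
      using extremal_form_bracket_in_span[OF g gw] simple_lie_bracket_not_in_span[OF simple \<open>x \<noteq> 0\<close>]
      by blast
    define \<mu> where "\<mu> = g (\<phi> w) / g w"
    have "br x w \<in> {a. \<phi> a = sc \<mu> a}"
      using centroid_bracket_eigenvector[OF \<phi> \<open>x \<noteq> 0\<close> g gw] by (simp add: \<mu>_def)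
    then have "{a. \<phi> a = sc \<mu> a} = UNIV"
      using simple_lie_ideal_cases[OF simple centroid_eigenspace_ideal[OF \<phi>]] \<open>br x w \<noteq> 0\<close> by blast
    then show "\<phi> \<in> range sc" by auto
  qed
qed

end

lemma field_hom_vector_space:
  assumes "field_hom \<iota>"
  shows "vector_space (ext_scale \<iota>)"
  using assms unfolding field_hom_def module_iff_vector_space[symmetric]
  by unfold_locales (simp_all add: ext_scale_def algebra_simps)

lemma ext_degree_le_2_generator:
  fixes \<iota> :: "'k::field \<Rightarrow> 'K::field"
  assumes hom: "field_hom \<iota>" and deg: "ext_degree_le \<iota> 2"
  obtains \<theta> where "\<theta> \<noteq> 0" and "\<And>y. \<exists>\<alpha> \<beta>. y = \<iota> \<alpha> + \<iota> \<beta> * \<theta>"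
proof -
  interpret K: vector_space "ext_scale \<iota>" using field_hom_vector_space[OF hom] .
  have \<iota>_zero: "\<iota> 0 = 0" using K.scale_zero_left[of 1] by (simp add: ext_scale_def)
  have span_one: "K.span {1} = range \<iota>" by (simp add: K.span_singleton ext_scale_def)
  show thesis
  proof (cases "range \<iota> = UNIV")
    case True
    show thesis
    proof (rule that[of 1])
      show "\<exists>\<alpha> \<beta>. y = \<iota> \<alpha> + \<iota> \<beta> * 1" for y
        using True \<iota>_zero by (metis UNIV_I add_0_right imageE mult_zero_left)
    qed simp
  next
    case False
    then obtain \<theta> where \<theta>: "\<theta> \<notin> range \<iota>" by blast
    have "\<theta> \<noteq> 0" using \<theta> \<iota>_zero by auto
    have "1 \<in> range \<iota>" using hom unfolding field_hom_def by (metis rangeI)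
    have indep: "K.independent {\<theta>, 1}"
      using \<theta> by (intro K.independent_insertI) (simp_all add: span_one K.independent_empty)
    have "y \<in> K.span {\<theta>, 1}" for y
    proof (rule ccontr)
      assume y: "y \<notin> K.span {\<theta>, 1}"
      obtain B where B: "finite B" "card B \<le> 2" "K.span B = UNIV"
        using deg unfolding ext_degree_le_def by blast
      have "card {y, \<theta>, 1} \<le> card B"
        using K.independent_span_bound[OF B(1) K.independent_insertI[OF y indep]] B(3) by blast
      moreover have "card {y, \<theta>, 1} = 3"
        using y K.span_base[of _ "{\<theta>, 1}"] \<theta> \<open>1 \<in> range \<iota>\<close> by (auto simp: card_insert_if)
      ultimately show False using B(2) by simp
    qed
    then have "\<exists>\<alpha> \<beta>. y = \<iota> \<alpha> + \<iota> \<beta> * \<theta>" for y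
      unfolding K.span_breakdown_eq span_one ext_scale_def by (metis diff_eq_eq rangeE)
    with \<open>\<theta> \<noteq> 0\<close> show thesis using that by blast
  qed
qed

locale quadratic_scalar_extension = L: lie_alg scL brL
  for scL :: "'k::field \<Rightarrow> 'l::ab_group_add \<Rightarrow> 'l" and brL +
  fixes \<iota> :: "'k \<Rightarrow> 'K::field" and scM :: "'K \<Rightarrow> 'm::ab_group_add \<Rightarrow> 'm" and brM
    and j :: "'l \<Rightarrow> 'm" and \<theta> :: 'K
  assumes scalar_extension: "scalar_extension \<iota> scL brL scM brM j"
    and \<theta>_nonzero: "\<theta> \<noteq> 0"
    and \<theta>_generates: "\<exists>\<alpha> \<beta>. y = \<iota> \<alpha> + \<iota> \<beta> * \<theta>"
begin

sublocale M: lie_alg scM brM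
  using scalar_extension unfolding scalar_extension_def lie_alg_def by blast

lemma j_scale: "j (scL c x) = scM (\<iota> c) (j x)"
  and j_bracket: "j (brL x y) = brM (j x) (j y)"
  and j_basis: "L.independent B \<Longrightarrow> L.span B = UNIV \<Longrightarrow>
    inj_on j B \<and> M.independent (j ` B) \<and> M.span (j ` B) = UNIV"
  using scalar_extension unfolding scalar_extension_def by blast+

sublocale j: additive j
  using scalar_extension unfolding scalar_extension_def by unfold_locales blast

declare j.zero [simp]

lemma j_eq_zero_iff [simp]: "j a = 0 \<longleftrightarrow> a = 0"
proof
  assume "j a = 0"
  show "a = 0"
  proof (rule ccontr)
    assume "a \<noteq> 0"
    then obtain B where "{a} \<subseteq> B" "L.independent B" "UNIV \<subseteq> L.span B"
      using L.maximal_independent_subset_extend[of "{a}" UNIV] by auto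
    then have "M.independent (j ` B)" and "0 \<in> j ` B"
      using j_basis[of B] \<open>j a = 0\<close> by auto
    then show False using M.dependent_zero by blast
  qed
qed simp

lemma element_decomposition: "\<exists>a b. m = j a + scM \<theta> (j b)"
proof -
  let ?S = "{j a + scM \<theta> (j b) | a b. True}"
  have S_add: "m + m' \<in> ?S" if "m \<in> ?S" "m' \<in> ?S" for m m'
  proof -
    from that obtain a b a' b' where "m = j a + scM \<theta> (j b)" "m' = j a' + scM \<theta> (j b')" by blast
    then have "m + m' = j (a + a') + scM \<theta> (j (b + b'))" by (simp add: j.add M.scale_right_distrib)
    then show ?thesis by blast
  qed
  have S_scale_base: "scM (\<iota> \<alpha>) m \<in> ?S" if "m \<in> ?S" for m \<alpha>
  proof -
    from that obtain a b where "m = j a + scM \<theta> (j b)" by blast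
    then have "scM (\<iota> \<alpha>) m = j (scL \<alpha> a) + scM \<theta> (j (scL \<alpha> b))"
      by (simp add: j_scale M.scale_right_distrib mult.commute)
    then show ?thesis by blast
  qed
  obtain \<gamma> \<delta> where \<theta>_square: "\<theta> * \<theta> = \<iota> \<gamma> + \<iota> \<delta> * \<theta>" using \<theta>_generates by blast
  have S_scale_\<theta>: "scM \<theta> m \<in> ?S" if "m \<in> ?S" for m
  proof -
    from that obtain a b where "m = j a + scM \<theta> (j b)" by blast
    then have "scM \<theta> m = j (scL \<gamma> b) + scM \<theta> (j (a + scL \<delta> b))"
      by (simp add: \<theta>_square j.add j_scale M.scale_right_distrib M.scale_left_distrib algebra_simps)
    then show ?thesis by blast
  qed
  have "M.subspace ?S"
  proof (rule M.subspaceI)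
    show "0 \<in> ?S" by (force intro: exI[of _ 0])
    show "scM c m \<in> ?S" if "m \<in> ?S" for c m
    proof -
      obtain \<alpha> \<beta> where "c = \<iota> \<alpha> + \<iota> \<beta> * \<theta>" using \<theta>_generates by blast
      then have "scM c m = scM (\<iota> \<alpha>) m + scM (\<iota> \<beta>) (scM \<theta> m)" by (simp add: M.scale_left_distrib)
      then show ?thesis by (simp only:) (intro S_add S_scale_base S_scale_\<theta> that)
    qed
  qed (rule S_add)
  moreover obtain B where "L.independent B" "UNIV \<subseteq> L.span B"
    using L.maximal_independent_subset_extend[of "{}" UNIV] L.independent_empty by auto
  moreover have "j ` B \<subseteq> ?S" by (force intro: exI[of _ 0])
  ultimately have "M.span (j ` B) \<subseteq> ?S" using M.span_minimal by blast
  then show ?thesis using j_basis[of B] \<open>UNIV \<subseteq> L.span B\<close> \<open>L.independent B\<close> by auto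
qed

lemma lie_ideal_vimage:
  assumes "lie_ideal scM brM J"
  shows "lie_ideal scL brL (j -` J)"
proof (rule L.lie_idealI)
  show "L.subspace (j -` J)"
    using assms unfolding lie_ideal_def
    by (intro L.subspaceI) (auto simp: j.add j_scale M.subspace_0 M.subspace_add M.subspace_scale)
  show "brL x y \<in> j -` J" if "y \<in> j -` J" for x y
    using assms that unfolding lie_ideal_def by (simp add: j_bracket)
qed

context
  fixes J :: "'m set"
  assumes J_ideal: "lie_ideal scM brM J" and J_vimage: "j -` J = {0}"
begin

lemma J_subspace: "M.subspace J"
  and J_bracket: "y \<in> J \<Longrightarrow> brM x y \<in> J"
  using J_ideal unfolding lie_ideal_def by blast+

lemma j_mem_J_iff: "j a \<in> J \<longleftrightarrow> a = 0"
  using J_vimage by blast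

lemma J_scale_cancel:
  assumes "scM c m \<in> J" and "c \<noteq> 0"
  shows "m \<in> J"
  using M.subspace_scale[OF J_subspace assms(1), of "inverse c"] assms(2) by simp

lemma graph_unique:
  assumes "j a + scM \<theta> (j b) \<in> J" and "j a + scM \<theta> (j b') \<in> J"
  shows "b = b'"
proof -
  have "(j a + scM \<theta> (j b)) - (j a + scM \<theta> (j b')) = scM \<theta> (j (b - b'))"
    by (simp add: j.diff M.scale_right_diff_distrib)
  then have "j (b - b') \<in> J"
    using M.subspace_diff[OF J_subspace assms] J_scale_cancel \<theta>_nonzero by metis
  then show ?thesis by (simp add: j_mem_J_iff)
qed

lemma graph_domain_ideal: "lie_ideal scL brL {a. \<exists>b. j a + scM \<theta> (j b) \<in> J}" (is "lie_ideal _ _ ?P")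
proof (rule L.lie_idealI)
  show "L.subspace ?P"
  proof (rule L.subspaceI)
    show "0 \<in> ?P" using M.subspace_0[OF J_subspace] by (auto intro: exI[of _ 0])
    show "x + y \<in> ?P" if "x \<in> ?P" "y \<in> ?P" for x y
    proof -
      from that obtain b b' where "j x + scM \<theta> (j b) \<in> J" "j y + scM \<theta> (j b') \<in> J" by blast
      from M.subspace_add[OF J_subspace this] have "j (x + y) + scM \<theta> (j (b + b')) \<in> J"
        by (simp add: j.add M.scale_right_distrib algebra_simps)
      then show ?thesis by blast
    qed
    show "scL c x \<in> ?P" if "x \<in> ?P" for c x
    proof -
      from that obtain b where "j x + scM \<theta> (j b) \<in> J" by blast
      from M.subspace_scale[OF J_subspace this, of "\<iota> c"] have "j (scL c x) + scM \<theta> (j (scL c b)) \<in> J"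
        by (simp add: j_scale M.scale_right_distrib mult.commute)
      then show ?thesis by blast
    qed
  qed
  show "brL x y \<in> ?P" if "y \<in> ?P" for x y
  proof -
    from that obtain b where "j y + scM \<theta> (j b) \<in> J" by blast
    from J_bracket[OF this, of "j x"] have "j (brL x y) + scM \<theta> (j (brL x b)) \<in> J"
      by (simp add: j_bracket M.bracket_add_right M.bracket_scale_right)
    then show ?thesis by blast
  qed
qed

lemma graph_centroid:
  assumes graph: "\<And>a. j a + scM \<theta> (j (\<phi> a)) \<in> J"
  shows "\<phi> \<in> centroid scL brL"
  unfolding centroid_def
proof (intro CollectI conjI allI)
  show "\<phi> (a + b) = \<phi> a + \<phi> b" for a b
    using M.subspace_add[OF J_subspace graph[of a] graph[of b]]
    by (intro graph_unique[OF graph]) (simp add: j.add M.scale_right_distrib algebra_simps)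
  show "\<phi> (scL c a) = scL c (\<phi> a)" for c a
    using M.subspace_scale[OF J_subspace graph[of a], of "\<iota> c"]
    by (intro graph_unique[OF graph]) (simp add: j_scale M.scale_right_distrib mult.commute)
  show "\<phi> (brL a b) = brL a (\<phi> b)" for a b
    using J_bracket[OF graph[of b], of "j a"]
    by (intro graph_unique[OF graph]) (simp add: j_bracket M.bracket_add_right M.bracket_scale_right)
qed

lemma ideal_trivial_if_central:
  assumes simple: "simple_lie scL brL" and central: "centroid scL brL \<subseteq> range scL"
  shows "J = {0}"
proof -
  let ?P = "{a. \<exists>b. j a + scM \<theta> (j b) \<in> J}"
  have J_zero: "0 \<in> J" using M.subspace_0[OF J_subspace] .
  have "m = 0" if "m \<in> J" for m
  proof -
    obtain a b where m: "m = j a + scM \<theta> (j b)" using element_decomposition by blast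
    consider "?P = {0}" | "?P = UNIV" using simple_lie_ideal_cases[OF simple graph_domain_ideal] by blast
    then show ?thesis
    proof cases
      case 1
      with m \<open>m \<in> J\<close> have "a = 0" by blast
      with m \<open>m \<in> J\<close> J_zero have "b = 0" using graph_unique[of 0 b 0] by simp
      with m \<open>a = 0\<close> show ?thesis by simp
    next
      case 2
      then have "\<forall>a. \<exists>b. j a + scM \<theta> (j b) \<in> J" by blast
      then obtain \<phi> where \<phi>: "\<And>a. j a + scM \<theta> (j (\<phi> a)) \<in> J" by metis
      obtain \<mu> where "\<phi> = scL \<mu>" using central graph_centroid[OF \<phi>] by blast
      with \<phi> have graph: "scM (1 + \<theta> * \<iota> \<mu>) (j a) \<in> J" for a
        by (simp add: j_scale M.scale_left_distrib)
      show ?thesis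
      proof (cases "1 + \<theta> * \<iota> \<mu> = 0")
        case True
        have "j a + scM \<theta> (j (scL \<mu> a)) \<in> J"
          using graph[of a] by (simp add: j_scale M.scale_left_distrib)
        with m \<open>m \<in> J\<close> have "b = scL \<mu> a" using graph_unique by blast
        with m have "m = scM (1 + \<theta> * \<iota> \<mu>) (j a)" by (simp add: j_scale M.scale_left_distrib)
        with True show ?thesis by simp
      next
        case False
        then have "j x \<in> J" for x using graph J_scale_cancel by blast
        then have "x = 0" for x :: 'l using j_mem_J_iff by blast
        then show ?thesis using simple_lie_nonabelian[OF simple] by metis
      qed
    qed
  qed
  then show ?thesis using J_zero by blast
qed

end

theorem simple_if_central:
  assumes simple: "simple_lie scL brL" and central: "centroid scL brL \<subseteq> range scL"
  shows "simple_lie scM brM"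
  unfolding simple_lie_def
proof (intro conjI allI impI)
  obtain x y where "brL x y \<noteq> 0" using simple_lie_nonabelian[OF simple] by blast
  then have "brM (j x) (j y) \<noteq> 0" by (simp flip: j_bracket)
  then show "\<exists>x y. brM x y \<noteq> 0" by blast
  show "J = {0} \<or> J = UNIV" if J: "lie_ideal scM brM J" for J
    using simple_lie_ideal_cases[OF simple lie_ideal_vimage[OF J]]
  proof
    assume "j -` J = {0}"
    then show ?thesis using ideal_trivial_if_central[OF J _ simple central] by blast
  next
    assume "j -` J = UNIV"
    then have "j a + scM \<theta> (j b) \<in> J" for a b
      using J unfolding lie_ideal_def by (blast intro: M.subspace_add M.subspace_scale)
    then have "m \<in> J" for m using element_decomposition[of m] by blast
    then show ?thesis by blast
  qed
qed

end

theorem lemma5p2: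
  fixes scL :: "'k::field \<Rightarrow> 'l::ab_group_add \<Rightarrow> 'l"
    and brL :: "'l \<Rightarrow> 'l \<Rightarrow> 'l"
    and \<iota> :: "'k \<Rightarrow> 'K::field"
    and scM :: "'K \<Rightarrow> 'm::ab_group_add \<Rightarrow> 'm"
    and brM :: "'m \<Rightarrow> 'm \<Rightarrow> 'm"
    and j :: "'l \<Rightarrow> 'm"
  assumes L: "lie_algebra scL brL"
    and simple: "simple_lie scL brL"
    and card_k: "infinite (UNIV :: 'k set) \<or> card (UNIV :: 'k set) > 2"
    and gen: "lie_generated scL brL {a. pure_extremal scL brL a} = UNIV"
    and galois: "galois_ext \<iota>"
    and deg: "ext_degree_le \<iota> 2"
    and tensor: "scalar_extension \<iota> scL brL scM brM j"
    and lines: "geometry_has_lines scM brM"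
    and sympl: "\<exists>a b. symplectic_pair scL brL a b"
  shows "simple_lie scM brM"
proof -
  have "field_hom \<iota>" using galois unfolding galois_ext_def by blast
  then obtain \<theta> where "\<theta> \<noteq> 0" and "\<And>y. \<exists>\<alpha> \<beta>. y = \<iota> \<alpha> + \<iota> \<beta> * \<theta>"
    using ext_degree_le_2_generator[OF _ deg] by blast
  then interpret quadratic_scalar_extension scL brL \<iota> scM brM j \<theta>
    using L tensor by unfold_locales (simp_all add: lie_alg_def)
  obtain x where "pure_extremal scL brL x" using sympl unfolding symplectic_pair_def by blast
  then have "centroid scL brL = range scL" by (rule L.centroid_simple_pure_extremal[OF simple])
  then show ?thesis using simple_if_central[OF simple] by blast
qed

end
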